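(* Let $d\ge1$ and equip $\mathbb{R}^d$ with the $\ell^\infty$-norm $|(\xi^1,\dots,\xi^d)|_\infty=\max_i|\xi^i|$. Let $C_d$ be the smallest real constant such that for every $N\ge1$, every $(\xi_1,\dots,\xi_N)\in([0,1]^d)^N$ and every continuous $f:[0,1]^d\to\mathbb{R}$, $$\Big|\int_{[0,1]^d}f(u)\,du-\frac1N\sum_{i=1}^Nf(\xi_i)\Big|\le C_d\,w\big(f,D^*_N(\xi_1,\dots,\xi_N)^{\frac1d}\big)$$ (this constant is finite, with $C_1=1$ and $C_d\in[1,4]$ for $d\ge2$). Then: (a) for every $N\ge1$ and every $(\xi_1,\dots,\xi_N)\in([0,1]^d)^N$, $$e_1\big(\{\xi_1,\dots,\xi_N\},U([0,1]^d)\big)\le C_d\,D^*_N(\xi_1,\dots,\xi_N)^{\frac1d};$$ (b) in particular, when $d=1$, $e_1\big(\{\xi_1,\dots,\xi_N\},U([0,1])\big)\le D^*_N(\xi_1,\dots,\xi_N)$.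
   Context: $U([0,1]^d)$ is the uniform distribution on $[0,1]^d$ and, for $U\sim U([0,1]^d)$ and $\Gamma\subset\mathbb{R}^d$, $e_1(\Gamma,U([0,1]^d))=\mathbb{E}\min_{a\in\Gamma}|U-a|_\infty$. The star discrepancy is $D^*_N(\xi_1,\dots,\xi_N)=\sup_{u\in[0,1]^d}\big|\frac1N\sum_{i=1}^N\mathbf{1}_{\{\xi_i\in[\![0,u]\!]\}}-\lambda_d([\![0,u]\!])\big|$ where $[\![0,u]\!]=\prod_{\ell=1}^d[0,u^\ell]$. The uniform continuity modulus is $w(f,\delta)=\sup\{|f(\xi)-f(\xi')|:\xi,\xi'\in[0,1]^d,\ |\xi-\xi'|_\infty\le\delta\}$. *)

theory Defs
  imports "HOL-Analysis.Analysis"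
begin

text \<open>Points of R^d are vectors of type real^'n, d = CARD('n).\<close>

definition unit_cube :: "(real^'n) set" where
  "unit_cube = cbox 0 One"

definition linf_norm :: "real^'n \<Rightarrow> real" where
  "linf_norm x = Max (range (\<lambda>i. \<bar>x $ i\<bar>))"

definition star_discrepancy :: "nat \<Rightarrow> (nat \<Rightarrow> real^'n) \<Rightarrow> real" where
  "star_discrepancy N xi =
     (SUP u\<in>unit_cube. \<bar>real (card {i\<in>{..<N}. xi i \<in> cbox 0 u}) / real N
                          - measure lborel (cbox 0 u)\<bar>)"

definition modulus :: "(real^'n \<Rightarrow> real) \<Rightarrow> real \<Rightarrow> real" where
  "modulus f \<delta> = (SUP p\<in>{(x, y). x \<in> unit_cube \<and> y \<in> unit_cube \<and> linf_norm (x - y) \<le> \<delta>}.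
                      \<bar>f (fst p) - f (snd p)\<bar>)"

text \<open>L^1 quantization error of the uniform distribution on [0,1]^d (Lebesgue measure of
  the cube is 1, so the expectation is the integral over the cube).\<close>
definition e1_unif :: "(real^'n) set \<Rightarrow> real" where
  "e1_unif \<Gamma> = integral unit_cube (\<lambda>u. Inf ((\<lambda>a. linf_norm (u - a)) ` \<Gamma>))"

definition Cd :: "'n::finite itself \<Rightarrow> real" where
  "Cd _ = Inf {C. \<forall>N (xi :: nat \<Rightarrow> real^'n) f. N \<ge> 1 \<longrightarrow> (\<forall>i<N. xi i \<in> unit_cube) \<longrightarrow>
              continuous_on unit_cube f \<longrightarrow>
              \<bar>integral unit_cube f - (1 / real N) * (\<Sum>i<N. f (xi i))\<bar>
                \<le> C * modulus f (star_discrepancy N xi powr (1 / real CARD('n)))}"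

end

theory Submission
  imports Defs
begin

text \<open>For a finite set G the function u \<mapsto> min_{a \<in> G} |u - a|_\<infinity> is 1-Lipschitz for the
  sup-norm and vanishes on G, so its integral e_1(G) is bounded by C w(., D^(1/d)) \<le> C D^(1/d)
  for every constant C admissible in the Koksma--Hlawka type inequality, hence by their infimum
  C_d, provided some admissible constant exists. Existence (with constant 2 + 8^d) is the real
  work: on a grid of cells of side 1/m \<approx> D^(1/d), replacing f by its values at the upper corners
  of the cells costs 2 w(f, 1/m), and the remaining sum of corner values weighted by the signed
  masses of the cells is controlled by multidimensional summation by parts, since the partial
  sums of these masses over lower boxes of cells are local discrepancies. For d = 1 one shows
  directly that every point of [0, 1] lies within D of some xi_i.\<close>

section \<open>Summation by parts on grids\<close>

lemma sum_diff_first_by_parts: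
  fixes g \<sigma> :: "nat \<Rightarrow> 'a::comm_ring"
  shows "(\<Sum>t\<le>n. (g t - g 0) * \<sigma> t)
    = (g n - g 0) * (\<Sum>s\<le>n. \<sigma> s) - (\<Sum>t<n. (g (Suc t) - g t) * (\<Sum>s\<le>t. \<sigma> s))"
  by (induction n) (simp_all add: algebra_simps)

lemma abs_diff_first_le_steps:
  fixes g :: "nat \<Rightarrow> real"
  assumes "\<And>t. t < n \<Longrightarrow> \<bar>g (Suc t) - g t\<bar> \<le> \<omega>"
  shows "\<bar>g n - g 0\<bar> \<le> n * \<omega>"
  using assms
proof (induction n)
  case (Suc n)
  have "\<bar>g (Suc n) - g 0\<bar> \<le> \<bar>g (Suc n) - g n\<bar> + \<bar>g n - g 0\<bar>" by linarith
  also have "\<dots> \<le> \<omega> + n * \<omega>" using Suc by (intro add_mono) auto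
  finally show ?case by (simp add: algebra_simps)
qed simp

lemma summation_by_parts_bound:
  fixes g \<sigma> :: "nat \<Rightarrow> real"
  assumes steps: "\<And>t. Suc t < m \<Longrightarrow> \<bar>g (Suc t) - g t\<bar> \<le> \<omega>"
    and partial_sums: "\<And>t. t < m \<Longrightarrow> \<bar>\<Sum>s\<le>t. \<sigma> s\<bar> \<le> D"
    and "0 \<le> \<omega>"
  shows "\<bar>(\<Sum>t<m. g t * \<sigma> t) - g 0 * (\<Sum>t<m. \<sigma> t)\<bar> \<le> 2 * real m * \<omega> * D"
proof (cases m)
  case (Suc n)
  have D: "0 \<le> D" using partial_sums[of 0] Suc by fastforce
  have "(\<Sum>t<m. g t * \<sigma> t) - g 0 * (\<Sum>t<m. \<sigma> t) = (\<Sum>t\<le>n. (g t - g 0) * \<sigma> t)"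
    by (simp add: Suc lessThan_Suc_atMost sum_distrib_left sum_subtractf algebra_simps)
  also have "\<dots> = (g n - g 0) * (\<Sum>s\<le>n. \<sigma> s) - (\<Sum>t<n. (g (Suc t) - g t) * (\<Sum>s\<le>t. \<sigma> s))"
    by (rule sum_diff_first_by_parts)
  finally have eq: "(\<Sum>t<m. g t * \<sigma> t) - g 0 * (\<Sum>t<m. \<sigma> t) = \<dots>" .
  have "\<bar>(g n - g 0) * (\<Sum>s\<le>n. \<sigma> s)\<bar> \<le> (n * \<omega>) * D"
    unfolding abs_mult using abs_diff_first_le_steps[of n g \<omega>] steps partial_sums[of n] Suc \<open>0 \<le> \<omega>\<close>
    by (intro mult_mono) auto
  moreover have "\<bar>\<Sum>t<n. (g (Suc t) - g t) * (\<Sum>s\<le>t. \<sigma> s)\<bar> \<le> (\<Sum>t<n. \<omega> * D)"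
    by (rule order_trans[OF sum_abs], rule sum_mono)
       (unfold abs_mult, use steps partial_sums Suc \<open>0 \<le> \<omega>\<close> in \<open>intro mult_mono, auto\<close>)
  ultimately have "\<bar>(\<Sum>t<m. g t * \<sigma> t) - g 0 * (\<Sum>t<m. \<sigma> t)\<bar> \<le> 2 * real n * \<omega> * D"
    unfolding eq by (simp add: abs_triangle_ineq4 algebra_simps)
  also have "\<dots> \<le> 2 * real m * \<omega> * D"
    using Suc D \<open>0 \<le> \<omega>\<close> by (intro mult_right_mono) auto
  finally show ?thesis .
qed simp

definition grid :: "nat \<Rightarrow> 'i set \<Rightarrow> ('i \<Rightarrow> nat) set" where
  "grid m S = {k. \<forall>i. (i \<in> S \<longrightarrow> k i < m) \<and> (i \<notin> S \<longrightarrow> k i = 0)}"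

lemma grid_empty [simp]: "grid m {} = {\<lambda>_. 0}"
  by (auto simp: grid_def)

lemma grid_UNIV: "grid m UNIV = {k. \<forall>i. k i < m}"
  by (simp add: grid_def)

lemma fun_upd_in_grid_insert: "j \<in> grid m S \<Longrightarrow> t < m \<Longrightarrow> j(a := t) \<in> grid m (insert a S)"
  by (auto simp: grid_def)

lemma grid_step_index_in: "j \<in> grid m S \<Longrightarrow> j(i := Suc (j i)) \<in> grid m S \<Longrightarrow> i \<in> S"
  unfolding grid_def by (metis (mono_tags, lifting) fun_upd_same mem_Collect_eq nat.distinct(1))

lemma grid_insert:
  assumes "a \<notin> S"
  shows "grid m (insert a S) = (\<lambda>(j, t). j(a := t)) ` (grid m S \<times> {..<m})"
proof safe
  fix k assume k: "k \<in> grid m (insert a S)"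
  have "k(a := 0) \<in> grid m S" "k a < m" using k assms by (auto simp: grid_def)
  then show "k \<in> (\<lambda>(j, t). j(a := t)) ` (grid m S \<times> {..<m})"
    by (intro image_eqI[where x="(k(a := 0), k a)"]) auto
qed (auto simp: grid_def)

lemma inj_on_fun_upd_grid:
  assumes "a \<notin> S"
  shows "inj_on (\<lambda>(j, t). j(a := t)) (grid m S \<times> UNIV)"
proof (rule inj_onI, clarify)
  fix j t j' t'
  assume "j \<in> grid m S" "j' \<in> grid m S" and eq: "j(a := t) = j'(a := t')"
  then have "j a = 0" "j' a = 0" using assms by (auto simp: grid_def)
  then show "j = j' \<and> t = t'" using eq by (metis fun_upd_apply fun_upd_triv fun_upd_upd)
qed

lemma finite_grid: "finite S \<Longrightarrow> finite (grid m S)"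
  by (induction rule: finite_induct) (simp_all add: grid_insert)

lemma sum_fun_upd_image:
  assumes "a \<notin> S" "A \<subseteq> grid m S" "finite A" "finite B"
  shows "(\<Sum>k\<in>(\<lambda>(j, t). j(a := t)) ` (A \<times> B). \<phi> k) = (\<Sum>t\<in>B. \<Sum>j\<in>A. \<phi> (j(a := t)))"
proof -
  have "inj_on (\<lambda>(j, t). j(a := t)) (A \<times> B)"
    by (rule inj_on_subset[OF inj_on_fun_upd_grid[OF assms(1)]]) (use assms(2) in auto)
  then have "(\<Sum>k\<in>(\<lambda>(j, t). j(a := t)) ` (A \<times> B). \<phi> k) = (\<Sum>(j, t)\<in>A \<times> B. \<phi> (j(a := t)))"
    by (subst sum.reindex) (simp_all add: case_prod_beta o_def)
  also have "\<dots> = (\<Sum>j\<in>A. \<Sum>t\<in>B. \<phi> (j(a := t)))" by (rule sum.cartesian_product[symmetric])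
  finally show ?thesis by (simp add: sum.swap[of _ A])
qed

lemma sum_grid_insert:
  assumes "finite S" "a \<notin> S"
  shows "(\<Sum>j\<in>grid m (insert a S). \<phi> j) = (\<Sum>t<m. \<Sum>j\<in>grid m S. \<phi> (j(a := t)))"
  unfolding grid_insert[OF assms(2)] using assms by (intro sum_fun_upd_image) (auto simp: finite_grid)

lemma lower_grid_insert:
  assumes "a \<notin> S" "k \<in> grid m S" "t < m"
  shows "{j \<in> grid m (insert a S). j \<le> k(a := t)}
    = (\<lambda>(j, s). j(a := s)) ` ({j \<in> grid m S. j \<le> k} \<times> {..t})"
proof safe
  fix j assume j: "j \<in> grid m (insert a S)" "j \<le> k(a := t)"
  have "k a = 0" using assms by (auto simp: grid_def)
  then have "j(a := 0) \<in> grid m S" "j(a := 0) \<le> k" "j a \<le> t"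
    using j assms by (auto simp: grid_def le_fun_def split: if_splits)
  then show "j \<in> (\<lambda>(j, s). j(a := s)) ` ({j \<in> grid m S. j \<le> k} \<times> {..t})"
    by (intro image_eqI[where x="(j(a := 0), j a)"]) auto
qed (use assms in \<open>auto simp: grid_def le_fun_def\<close>)

lemma sum_lower_grid_insert:
  assumes "finite S" "a \<notin> S" "k \<in> grid m S" "t < m"
  shows "(\<Sum>j\<in>{j \<in> grid m (insert a S). j \<le> k(a := t)}. \<phi> j)
    = (\<Sum>s\<le>t. \<Sum>j\<in>{j \<in> grid m S. j \<le> k}. \<phi> (j(a := s)))"
  unfolding lower_grid_insert[OF assms(2-4)] using assms
  by (intro sum_fun_upd_image) (auto intro: finite_subset[OF _ finite_grid])

lemma lower_grid_top: "{j \<in> grid m S. j \<le> (\<lambda>i. if i \<in> S then m - 1 else 0)} = grid m S"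
  by (auto simp: grid_def le_fun_def)

lemma top_in_grid: "m \<ge> 1 \<Longrightarrow> (\<lambda>i. if i \<in> S then m - 1 else 0) \<in> grid m S"
  by (auto simp: grid_def)

lemma lower_sum_slice_bound:
  fixes \<nu> :: "('i \<Rightarrow> nat) \<Rightarrow> real"
  assumes "finite S" "a \<notin> S" "k \<in> grid m S" "t < m"
    and lower_sums: "\<And>k. k \<in> grid m (insert a S) \<Longrightarrow> \<bar>\<Sum>j\<in>{j \<in> grid m (insert a S). j \<le> k}. \<nu> j\<bar> \<le> D"
  shows "\<bar>\<Sum>j\<in>{j \<in> grid m S. j \<le> k}. \<nu> (j(a := t))\<bar> \<le> 2 * D"
proof -
  define Q where "Q s = (\<Sum>j\<in>{j \<in> grid m S. j \<le> k}. \<nu> (j(a := s)))" for s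
  have bound: "\<bar>\<Sum>r\<le>s. Q r\<bar> \<le> D" if "s < m" for s
    using lower_sums[OF fun_upd_in_grid_insert[OF assms(3) that]]
      sum_lower_grid_insert[OF assms(1-3) that, of \<nu>] by (simp add: Q_def)
  show ?thesis
  proof (cases t)
    case 0
    then show ?thesis using bound[OF assms(4)] by (simp add: Q_def)
  next
    case (Suc s)
    have "Q t = (\<Sum>r\<le>t. Q r) - (\<Sum>r\<le>s. Q r)" using Suc by simp
    then show ?thesis using bound[OF assms(4)] bound[of s] Suc assms(4) by (simp add: Q_def)
  qed
qed

lemma axis_summation_by_parts_bound:
  fixes h \<nu> :: "('i \<Rightarrow> nat) \<Rightarrow> real"
  assumes "finite S" "a \<notin> S" "0 \<le> \<omega>"
    and lower_sums: "\<And>k. k \<in> grid m (insert a S) \<Longrightarrow> \<bar>\<Sum>j\<in>{j \<in> grid m (insert a S). j \<le> k}. \<nu> j\<bar> \<le> D"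
    and steps: "\<And>t. Suc t < m \<Longrightarrow> \<bar>h ((\<lambda>_. 0)(a := Suc t)) - h ((\<lambda>_. 0)(a := t))\<bar> \<le> \<omega>"
  shows "\<bar>(\<Sum>t<m. h ((\<lambda>_. 0)(a := t)) * (\<Sum>j\<in>grid m S. \<nu> (j(a := t))))
      - h ((\<lambda>_. 0)(a := 0)) * (\<Sum>t<m. \<Sum>j\<in>grid m S. \<nu> (j(a := t)))\<bar> \<le> 2 * real m * \<omega> * D"
proof (rule summation_by_parts_bound[OF _ _ assms(3)])
  show "\<bar>h ((\<lambda>_. 0)(a := Suc t)) - h ((\<lambda>_. 0)(a := t))\<bar> \<le> \<omega>" if "Suc t < m" for t
    using steps[OF that] .
  let ?top = "\<lambda>i. if i \<in> S then m - 1 else 0"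
  fix t assume t: "t < m"
  have top: "?top \<in> grid m S" using t by (intro top_in_grid) simp
  have "(\<Sum>s\<le>t. \<Sum>j\<in>grid m S. \<nu> (j(a := s))) = (\<Sum>j\<in>{j \<in> grid m (insert a S). j \<le> ?top(a := t)}. \<nu> j)"
    unfolding sum_lower_grid_insert[OF assms(1,2) top t] lower_grid_top ..
  then show "\<bar>\<Sum>s\<le>t. \<Sum>j\<in>grid m S. \<nu> (j(a := s))\<bar> \<le> D"
    using lower_sums[OF fun_upd_in_grid_insert[OF top t]] by argo
qed

text \<open>Induction on the set of coordinates: peel off a coordinate a, apply the induction
  hypothesis on every slice j(a := t), whose lower sums are differences of two lower sums of the
  whole grid, and sum by parts along the axis of a.\<close>
lemma grid_summation_by_parts_bound:
  fixes h \<nu> :: "('i \<Rightarrow> nat) \<Rightarrow> real"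
  assumes "finite S" "0 \<le> \<omega>" "0 \<le> D"
    and "\<And>k. k \<in> grid m S \<Longrightarrow> \<bar>\<Sum>j\<in>{j \<in> grid m S. j \<le> k}. \<nu> j\<bar> \<le> D"
    and "\<And>j i. j \<in> grid m S \<Longrightarrow> j(i := Suc (j i)) \<in> grid m S \<Longrightarrow> \<bar>h (j(i := Suc (j i))) - h j\<bar> \<le> \<omega>"
  shows "\<bar>(\<Sum>j\<in>grid m S. h j * \<nu> j) - h (\<lambda>_. 0) * (\<Sum>j\<in>grid m S. \<nu> j)\<bar>
    \<le> 4 ^ card S * real m ^ card S * \<omega> * D"
  using assms(1,3-)
proof (induction S arbitrary: \<nu> h D rule: finite_induct)
  case (insert a S \<nu> h D)
  let ?X = "4 ^ card S * real m ^ card S"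
  define \<sigma> where "\<sigma> t = (\<Sum>j\<in>grid m S. \<nu> (j(a := t)))" for t
  define g where "g t = h ((\<lambda>_. 0)(a := t))" for t
  have slice: "\<bar>(\<Sum>j\<in>grid m S. h (j(a := t)) * \<nu> (j(a := t))) - g t * \<sigma> t\<bar> \<le> ?X * \<omega> * (2 * D)"
    if t: "t < m" for t
    unfolding \<sigma>_def g_def fun_upd_def[of "\<lambda>_. 0", symmetric]
  proof (rule insert.IH)
    show "\<bar>\<Sum>j\<in>{j \<in> grid m S. j \<le> k}. \<nu> (j(a := t))\<bar> \<le> 2 * D" if "k \<in> grid m S" for k
      using lower_sum_slice_bound[OF insert(1,2) that t] insert.prems(2) by blast
    fix j i assume j: "j \<in> grid m S" and j': "j(i := Suc (j i)) \<in> grid m S"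
    have "i \<noteq> a" using grid_step_index_in[OF j j'] insert(2) by auto
    then have "(j(a := t))(i := Suc ((j(a := t)) i)) = (j(i := Suc (j i)))(a := t)"
      by (auto simp: fun_eq_iff)
    then show "\<bar>h ((j(i := Suc (j i)))(a := t)) - h (j(a := t))\<bar> \<le> \<omega>"
      using insert.prems(3) fun_upd_in_grid_insert[OF j t] fun_upd_in_grid_insert[OF j' t] by metis
  qed (use insert.prems(1) in auto)
  have axis: "\<bar>(\<Sum>t<m. g t * \<sigma> t) - g 0 * (\<Sum>t<m. \<sigma> t)\<bar> \<le> 2 * real m * \<omega> * D"
    unfolding g_def \<sigma>_def
  proof (rule axis_summation_by_parts_bound[OF insert(1,2) assms(2) insert.prems(2)])
    fix t assume "Suc t < m"
    then have "(\<lambda>_. 0)(a := t) \<in> grid m (insert a S)" "(\<lambda>_. 0)(a := Suc t) \<in> grid m (insert a S)"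
      by (auto simp: grid_def)
    moreover have "((\<lambda>_. 0)(a := t))(a := Suc (((\<lambda>_. 0)(a := t)) a)) = (\<lambda>_. 0::nat)(a := Suc t)"
      by simp
    ultimately show "\<bar>h ((\<lambda>_. 0)(a := Suc t)) - h ((\<lambda>_. 0)(a := t))\<bar> \<le> \<omega>"
      using insert.prems(3)[of "(\<lambda>_. 0)(a := t)" a] by metis
  qed
  have "(\<Sum>j\<in>grid m (insert a S). h j * \<nu> j) - h (\<lambda>_. 0) * (\<Sum>j\<in>grid m (insert a S). \<nu> j)
      = (\<Sum>t<m. (\<Sum>j\<in>grid m S. h (j(a := t)) * \<nu> (j(a := t))) - g t * \<sigma> t)
        + ((\<Sum>t<m. g t * \<sigma> t) - g 0 * (\<Sum>t<m. \<sigma> t))"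
    by (simp add: sum_grid_insert[OF insert(1,2)] g_def \<sigma>_def sum_subtractf fun_upd_def[of "\<lambda>_. 0"])
  moreover have "\<bar>\<Sum>t<m. (\<Sum>j\<in>grid m S. h (j(a := t)) * \<nu> (j(a := t))) - g t * \<sigma> t\<bar>
      \<le> real m * (?X * \<omega> * (2 * D))"
    using order_trans[OF sum_abs sum_mono[of "{..<m}", OF slice]] by simp
  moreover have "real m \<le> real m * ?X"
    by (cases "m = 0") (auto intro: order_trans[OF _ mult_mono[OF one_le_power one_le_power]])
  then have "real m * \<omega> * D \<le> real m * ?X * \<omega> * D"
    using assms(2) insert.prems(1) by (intro mult_right_mono) auto
  ultimately have "\<bar>(\<Sum>j\<in>grid m (insert a S). h j * \<nu> j) - h (\<lambda>_. 0) * (\<Sum>j\<in>grid m (insert a S). \<nu> j)\<bar>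
      \<le> 4 * (real m * ?X * \<omega> * D)"
    using axis by (simp add: algebra_simps)
  then show ?case using insert(1,2) by (simp add: algebra_simps)
qed (use assms(2) in simp)

section \<open>The sup-norm, the unit cube and the modulus of continuity\<close>

lemma One_nth [simp]: "(One :: real^'n) $ i = 1"
  by (subst cart_eq_inner_axis) (simp add: inner_sum_Basis)

lemma sum_Basis_nth [simp]: "(\<Sum>x\<in>(Basis :: (real^'n) set). x $ i) = 1"
  using One_nth[of i] by (subst (asm) sum_component)

lemma mem_unit_cube: "x \<in> unit_cube \<longleftrightarrow> (\<forall>i. 0 \<le> x $ i \<and> x $ i \<le> 1)"
  by (simp add: unit_cube_def mem_box_cart)

lemma zero_in_unit_cube: "0 \<in> unit_cube"
  by (simp add: mem_unit_cube)

lemma One_in_unit_cube: "One \<in> unit_cube"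
  by (simp add: mem_unit_cube)

lemma measure_unit_cube: "measure lborel (unit_cube :: (real^'n) set) = 1"
  by (simp add: unit_cube_def content_cbox_cart)

lemma measure_cbox_zero:
  fixes u :: "real^'n"
  assumes "u \<in> unit_cube"
  shows "measure lborel (cbox 0 u) = (\<Prod>i\<in>UNIV. u $ i)"
proof -
  have "0 \<in> cbox 0 u" using assms by (simp add: mem_unit_cube mem_box_cart)
  then have "cbox 0 u \<noteq> {}" by blast
  then show ?thesis by (simp add: content_cbox_cart)
qed

lemma abs_nth_le_linf_norm: "\<bar>x $ i\<bar> \<le> linf_norm x"
  unfolding linf_norm_def by (rule Max_ge) auto

lemma linf_norm_le_iff: "linf_norm x \<le> c \<longleftrightarrow> (\<forall>i. \<bar>x $ i\<bar> \<le> c)"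
  unfolding linf_norm_def by (subst Max_le_iff) auto

lemma linf_norm_nonneg: "0 \<le> linf_norm x"
  using abs_nth_le_linf_norm[of x] abs_ge_zero order_trans by blast

lemma linf_norm_zero [simp]: "linf_norm 0 = 0"
  by (simp add: linf_norm_def)

lemma linf_norm_le_norm: "linf_norm x \<le> norm x"
  by (simp add: linf_norm_le_iff component_le_norm_cart)

lemma linf_norm_diff_triangle: "linf_norm (x - y) \<le> linf_norm (x - z) + linf_norm (z - y)"
proof -
  have "\<bar>(x - y) $ i\<bar> \<le> linf_norm (x - z) + linf_norm (z - y)" for i
    using abs_nth_le_linf_norm[of "x - z" i] abs_nth_le_linf_norm[of "z - y" i] by simp
  then show ?thesis by (simp add: linf_norm_le_iff)
qed

lemma linf_norm_minus_commute: "linf_norm (x - y) = linf_norm (y - x)"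
  unfolding linf_norm_def by (simp add: abs_minus_commute)

lemma abs_diff_le_modulus:
  fixes f :: "real^'n \<Rightarrow> real"
  assumes "continuous_on unit_cube f" "x \<in> unit_cube" "y \<in> unit_cube" "linf_norm (x - y) \<le> \<delta>"
  shows "\<bar>f x - f y\<bar> \<le> modulus f \<delta>"
proof -
  obtain B where B: "\<And>x. x \<in> unit_cube \<Longrightarrow> \<bar>f x\<bar> \<le> B"
    using compact_imp_bounded[OF compact_continuous_image[OF assms(1)]]
    by (auto simp: unit_cube_def bounded_iff)
  let ?P = "{(x, y). x \<in> (unit_cube :: (real^'n) set) \<and> y \<in> unit_cube \<and> linf_norm (x - y) \<le> \<delta>}"
  have "bdd_above ((\<lambda>p. \<bar>f (fst p) - f (snd p)\<bar>) ` ?P)"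
  proof (rule bdd_aboveI2)
    fix p assume "p \<in> ?P"
    then show "\<bar>f (fst p) - f (snd p)\<bar> \<le> 2 * B" using B[of "fst p"] B[of "snd p"] by auto
  qed
  moreover have "(x, y) \<in> ?P" using assms by auto
  ultimately show ?thesis unfolding modulus_def by (metis (no_types, lifting) cSUP_upper fst_conv snd_conv)
qed

lemma modulus_nonneg:
  fixes f :: "real^'n \<Rightarrow> real"
  assumes "continuous_on unit_cube f" "0 \<le> \<delta>"
  shows "0 \<le> modulus f \<delta>"
  using abs_diff_le_modulus[OF assms(1) zero_in_unit_cube zero_in_unit_cube, of \<delta>] assms(2)
  by (simp add: linf_norm_le_iff)

lemma modulus_le_of_lipschitz:
  fixes f :: "real^'n \<Rightarrow> real"
  assumes "\<And>x y. x \<in> unit_cube \<Longrightarrow> y \<in> unit_cube \<Longrightarrow> \<bar>f x - f y\<bar> \<le> linf_norm (x - y)"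
    and "0 \<le> \<delta>"
  shows "modulus f \<delta> \<le> \<delta>"
  unfolding modulus_def
proof (rule cSUP_least)
  have "(0, 0) \<in> {(x, y). x \<in> (unit_cube :: (real^'n) set) \<and> y \<in> unit_cube \<and> linf_norm (x - y) \<le> \<delta>}"
    using assms(2) zero_in_unit_cube by (simp add: linf_norm_le_iff)
  then show "{(x, y). x \<in> (unit_cube :: (real^'n) set) \<and> y \<in> unit_cube \<and> linf_norm (x - y) \<le> \<delta>} \<noteq> {}"
    by blast
next
  fix p assume "p \<in> {(x, y). x \<in> (unit_cube :: (real^'n) set) \<and> y \<in> unit_cube \<and> linf_norm (x - y) \<le> \<delta>}"
  then show "\<bar>f (fst p) - f (snd p)\<bar> \<le> \<delta>" using assms(1)[of "fst p" "snd p"] by auto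
qed

definition local_discrepancy :: "nat \<Rightarrow> (nat \<Rightarrow> real^'n) \<Rightarrow> real^'n \<Rightarrow> real" where
  "local_discrepancy N xi u
     = real (card {i\<in>{..<N}. xi i \<in> cbox 0 u}) / real N - measure lborel (cbox 0 u)"

lemma star_discrepancy_eq_SUP: "star_discrepancy N xi = (SUP u\<in>unit_cube. \<bar>local_discrepancy N xi u\<bar>)"
  unfolding star_discrepancy_def local_discrepancy_def ..

lemma abs_local_discrepancy_le_1:
  assumes "u \<in> unit_cube"
  shows "\<bar>local_discrepancy N xi u\<bar> \<le> 1"
proof -
  have card: "card {i\<in>{..<N}. xi i \<in> cbox 0 u} \<le> N"
    by (rule order_trans[OF card_mono[of "{..<N}"]]) auto
  have "0 \<le> real (card {i\<in>{..<N}. xi i \<in> cbox 0 u}) / real N"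
    "real (card {i\<in>{..<N}. xi i \<in> cbox 0 u}) / real N \<le> 1"
    using card by (auto simp: divide_le_eq_1)
  moreover have "0 \<le> measure lborel (cbox 0 u)" "measure lborel (cbox 0 u) \<le> 1"
    using assms unfolding measure_cbox_zero[OF assms] mem_unit_cube
    by (auto intro: prod_nonneg prod_le_1)
  ultimately show ?thesis unfolding local_discrepancy_def by linarith
qed

lemma abs_local_discrepancy_le_star_discrepancy:
  assumes "u \<in> unit_cube"
  shows "\<bar>local_discrepancy N xi u\<bar> \<le> star_discrepancy N xi"
  unfolding star_discrepancy_eq_SUP
  by (rule cSUP_upper[OF assms]) (use abs_local_discrepancy_le_1 in \<open>auto intro!: bdd_aboveI2\<close>)

lemma star_discrepancy_le_1: "star_discrepancy N (xi :: nat \<Rightarrow> real^'n) \<le> 1"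
  unfolding star_discrepancy_eq_SUP
  by (rule cSUP_least) (use zero_in_unit_cube abs_local_discrepancy_le_1 in auto)

text \<open>The box of volume 1/(2N) cannot contain exactly half a point.\<close>
lemma star_discrepancy_pos:
  fixes xi :: "nat \<Rightarrow> real^'n"
  assumes N: "N \<ge> 1"
  shows "0 < star_discrepancy N xi"
proof -
  define t where "t = (1 / (2 * real N)) powr (1 / real CARD('n))"
  have t: "0 < t" "t \<le> 1" using N unfolding t_def by (auto intro: powr_le1)
  define u :: "real^'n" where "u = t *\<^sub>R One"
  have u: "u \<in> unit_cube" unfolding mem_unit_cube u_def using t by simp
  have "measure lborel (cbox 0 u) = (\<Prod>i\<in>UNIV. u $ i)" by (rule measure_cbox_zero[OF u])
  also have "\<dots> = t ^ CARD('n)" by (simp add: u_def)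
  also have "\<dots> = 1 / (2 * real N)"
    using t N by (simp add: t_def powr_realpow[symmetric] powr_powr)
  finally have measure: "measure lborel (cbox 0 u) = 1 / (2 * real N)" .
  have "real (card {i\<in>{..<N}. xi i \<in> cbox 0 u}) / real N \<noteq> 1 / (2 * real N)"
  proof
    assume "real (card {i\<in>{..<N}. xi i \<in> cbox 0 u}) / real N = 1 / (2 * real N)"
    then have "2 * real (card {i\<in>{..<N}. xi i \<in> cbox 0 u}) = 1" using N by (simp add: field_simps)
    then have "2 * card {i\<in>{..<N}. xi i \<in> cbox 0 u} = 1" by linarith
    then show False by presburger
  qed
  then have "0 < \<bar>local_discrepancy N xi u\<bar>" unfolding local_discrepancy_def measure by simp
  then show ?thesis using abs_local_discrepancy_le_star_discrepancy[OF u, of N xi] by linarith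
qed

section \<open>Cells of a regular grid\<close>

text \<open>Cells are half-open intervals (k/m, (k + 1)/m], with 0 put into the first cell, so that
  the lower box cbox 0 (corner m k) is exactly the union of the cells with index at most k.\<close>
definition cell_index :: "nat \<Rightarrow> real \<Rightarrow> nat" where
  "cell_index m y = nat \<lceil>real m * y\<rceil> - 1"

lemma cell_index_less:
  assumes "m \<ge> 1" "0 \<le> y" "y \<le> 1"
  shows "cell_index m y < m"
proof -
  have "\<lceil>real m * y\<rceil> \<le> int m"
    using assms by (simp add: ceiling_le_iff mult_left_le)
  then show ?thesis using assms(1) unfolding cell_index_def by linarith
qed

lemma cell_index_le_iff:
  assumes "m \<ge> 1" "0 \<le> y"
  shows "cell_index m y \<le> k \<longleftrightarrow> y \<le> real (k + 1) / real m"
proof -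
  have "0 \<le> real m * y" using assms by simp
  then have "0 \<le> \<lceil>real m * y\<rceil>" by simp
  then have "cell_index m y \<le> k \<longleftrightarrow> \<lceil>real m * y\<rceil> \<le> int (k + 1)"
    unfolding cell_index_def by linarith
  also have "\<dots> \<longleftrightarrow> real m * y \<le> real (k + 1)" by (simp add: ceiling_le_iff)
  also have "\<dots> \<longleftrightarrow> y \<le> real (k + 1) / real m" using assms by (simp add: field_simps)
  finally show ?thesis .
qed

lemma abs_diff_cell_end_le:
  assumes "m \<ge> 1" "0 \<le> y"
  shows "\<bar>y - real (cell_index m y + 1) / real m\<bar> \<le> 1 / real m"
proof (cases "\<lceil>real m * y\<rceil> = 0")
  case True
  then have "real m * y \<le> 0" by (metis ceiling_le_zero order_refl)
  then have "y = 0" using assms by (simp add: mult_le_0_iff)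
  then show ?thesis using assms by (simp add: cell_index_def)
next
  case False
  have "0 \<le> real m * y" using assms by simp
  then have "0 \<le> \<lceil>real m * y\<rceil>" by simp
  then have end_eq: "real (cell_index m y + 1) = real_of_int \<lceil>real m * y\<rceil>"
    using False unfolding cell_index_def by linarith
  have "\<bar>real m * y - real_of_int \<lceil>real m * y\<rceil>\<bar> \<le> 1"
    using ceiling_correct[of "real m * y"] by linarith
  moreover have "y - real_of_int \<lceil>real m * y\<rceil> / real m = (real m * y - real_of_int \<lceil>real m * y\<rceil>) / real m"
    using assms by (simp add: field_simps)
  ultimately show ?thesis
    unfolding end_eq using assms by (simp add: abs_div_pos divide_right_mono)
qed
definition cell :: "nat \<Rightarrow> real^'n \<Rightarrow> ('n \<Rightarrow> nat)" where
  "cell m x = (\<lambda>i. cell_index m (x $ i))"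

definition corner :: "nat \<Rightarrow> ('n \<Rightarrow> nat) \<Rightarrow> real^'n" where
  "corner m k = (\<chi> i. real (k i + 1) / real m)"

lemma cell_in_grid: "m \<ge> 1 \<Longrightarrow> x \<in> unit_cube \<Longrightarrow> cell m x \<in> grid m UNIV"
  by (simp add: grid_UNIV cell_def mem_unit_cube cell_index_less)

lemma cell_le_iff: "m \<ge> 1 \<Longrightarrow> x \<in> unit_cube \<Longrightarrow> cell m x \<le> k \<longleftrightarrow> x \<in> cbox 0 (corner m k)"
  by (simp add: cell_def corner_def le_fun_def mem_unit_cube mem_box_cart cell_index_le_iff)

lemma linf_norm_diff_corner_cell:
  "m \<ge> 1 \<Longrightarrow> x \<in> unit_cube \<Longrightarrow> linf_norm (x - corner m (cell m x)) \<le> 1 / real m"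
  unfolding linf_norm_le_iff cell_def corner_def mem_unit_cube using abs_diff_cell_end_le by auto

lemma corner_in_unit_cube:
  assumes "k \<in> grid m UNIV"
  shows "corner m k \<in> unit_cube"
proof -
  have "real (k i + 1) \<le> real m" for i
    using assms by (simp add: grid_UNIV Suc_le_eq del: of_nat_Suc)
  then show ?thesis unfolding mem_unit_cube corner_def by (auto simp: divide_le_eq_1)
qed

lemma cbox_corner_subset_unit_cube:
  assumes "k \<in> grid m UNIV"
  shows "cbox 0 (corner m k) \<subseteq> unit_cube"
proof
  fix x assume "x \<in> cbox 0 (corner m k)"
  then show "x \<in> unit_cube"
    using corner_in_unit_cube[OF assms] unfolding mem_unit_cube mem_box_cart zero_index
    by (meson order_trans)
qed

lemma corner_top: "m \<ge> 1 \<Longrightarrow> corner m (\<lambda>_. m - 1) = One"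
  by (simp add: corner_def vec_eq_iff)

lemma linf_norm_corner_step: "linf_norm (corner m (k(i := Suc (k i))) - corner m k) \<le> 1 / real m"
  by (simp add: linf_norm_le_iff corner_def diff_divide_distrib[symmetric])

definition cell_indicator :: "nat \<Rightarrow> ('n \<Rightarrow> nat) \<Rightarrow> real^'n \<Rightarrow> real" where
  "cell_indicator m j x = of_bool (cell m x = j)"

lemma cell_indicator_integrable:
  fixes j :: "'n::finite \<Rightarrow> nat"
  shows "cell_indicator m j integrable_on unit_cube"
proof (rule measurable_bounded_by_integrable_imp_integrable)
  have "cell_indicator m j = (\<lambda>x::real^'n. of_bool (\<forall>i. nat \<lceil>real m * x $ i\<rceil> - 1 = j i))"
    by (auto simp: fun_eq_iff cell_indicator_def cell_def cell_index_def)
  moreover have "(\<lambda>x::real^'n. of_bool (\<forall>i. nat \<lceil>real m * x $ i\<rceil> - 1 = j i) :: real) \<in> borel_measurable borel"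
    by measurable
  ultimately show "cell_indicator m j \<in> borel_measurable (lebesgue_on unit_cube)"
    by (simp add: measurable_restrict_space1 measurable_completion)
  show "(\<lambda>x. 1::real) integrable_on unit_cube" unfolding unit_cube_def by (rule integrable_const)
qed (simp_all add: cell_indicator_def unit_cube_def)

lemma sum_cell_indicator:
  assumes "finite A"
  shows "(\<Sum>j\<in>A. c j * cell_indicator m j x) = (if cell m x \<in> A then c (cell m x) else 0)"
proof -
  have "(\<Sum>j\<in>A. c j * cell_indicator m j x) = (\<Sum>j\<in>A. if cell m x = j then c j else 0)"
    by (rule sum.cong) (auto simp: cell_indicator_def)
  then show ?thesis using assms by (simp add: sum.delta)
qed

lemma sum_lower_cell_indicator:
  assumes "m \<ge> 1" "x \<in> unit_cube"
  shows "(\<Sum>j\<in>{j \<in> grid m UNIV. j \<le> k}. cell_indicator m j x) = of_bool (x \<in> cbox 0 (corner m k))"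
  using sum_cell_indicator[of "{j \<in> grid m UNIV. j \<le> k}" "\<lambda>_. 1" m x]
    cell_in_grid[OF assms] cell_le_iff[OF assms] by (simp add: finite_grid)

lemma sum_lower_integral_cell_indicator:
  assumes m: "m \<ge> 1" and k: "k \<in> grid m UNIV"
  shows "(\<Sum>j\<in>{j \<in> grid m UNIV. j \<le> k}. integral unit_cube (cell_indicator m j))
    = measure lborel (cbox 0 (corner m k))"
proof -
  have "(\<Sum>j\<in>{j \<in> grid m UNIV. j \<le> k}. integral unit_cube (cell_indicator m j))
      = integral unit_cube (\<lambda>x. \<Sum>j\<in>{j \<in> grid m UNIV. j \<le> k}. cell_indicator m j x)"
    by (rule integral_sum[symmetric]) (simp_all add: finite_grid cell_indicator_integrable)
  also have "\<dots> = integral unit_cube (\<lambda>x. if x \<in> cbox 0 (corner m k) then 1 else 0)"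
    by (rule integral_cong) (simp add: sum_lower_cell_indicator[OF m])
  also have "\<dots> = integral (cbox 0 (corner m k)) (\<lambda>x. 1)"
    using cbox_corner_subset_unit_cube[OF k] by (simp add: integral_restrict_Int Int_absorb2)
  finally show ?thesis by simp
qed

lemma sum_lower_count_cell_indicator:
  fixes xi :: "nat \<Rightarrow> real^'n"
  assumes "m \<ge> 1" and "\<forall>i<N. xi i \<in> unit_cube"
  shows "(\<Sum>j\<in>{j \<in> grid m UNIV. j \<le> k}. \<Sum>i<N. cell_indicator m j (xi i))
    = real (card {i\<in>{..<N}. xi i \<in> cbox 0 (corner m k)})"
proof -
  have "(\<Sum>j\<in>{j \<in> grid m UNIV. j \<le> k}. \<Sum>i<N. cell_indicator m j (xi i))
      = (\<Sum>i<N. of_bool (xi i \<in> cbox 0 (corner m k)))"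
    using assms by (subst sum.swap) (simp add: sum_lower_cell_indicator)
  also have "\<dots> = real (card ({..<N} \<inter> {i. xi i \<in> cbox 0 (corner m k)}))"
    by (rule sum_of_bool_eq) auto
  finally show ?thesis by (simp add: Int_def)
qed

lemma step_function_eq_sum_cell_indicator:
  fixes c :: "('n::finite \<Rightarrow> nat) \<Rightarrow> real"
  assumes "m \<ge> 1" "x \<in> unit_cube"
  shows "c (cell m x) = (\<Sum>j\<in>grid m UNIV. c j * cell_indicator m j x)"
  using sum_cell_indicator[OF finite_grid, of UNIV c m x] cell_in_grid[OF assms] by simp

lemma step_function_integrable:
  fixes c :: "('n::finite \<Rightarrow> nat) \<Rightarrow> real"
  assumes "m \<ge> 1"
  shows "(\<lambda>x. c (cell m x)) integrable_on unit_cube"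
  by (rule integrable_eq[OF _ step_function_eq_sum_cell_indicator[OF assms, symmetric]])
     (simp_all add: finite_grid integrable_sum integrable_on_mult_right cell_indicator_integrable)

lemma integral_step_function:
  fixes c :: "('n::finite \<Rightarrow> nat) \<Rightarrow> real"
  assumes "m \<ge> 1"
  shows "integral unit_cube (\<lambda>x. c (cell m x))
    = (\<Sum>j\<in>grid m UNIV. c j * integral unit_cube (cell_indicator m j))"
  by (simp add: integral_cong[OF step_function_eq_sum_cell_indicator[OF assms, where c=c]] integral_sum
      finite_grid integrable_on_mult_right cell_indicator_integrable)

definition signed_cell_mass :: "nat \<Rightarrow> (nat \<Rightarrow> real^'n) \<Rightarrow> nat \<Rightarrow> ('n \<Rightarrow> nat) \<Rightarrow> real" where
  "signed_cell_mass N xi m j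
     = (\<Sum>i<N. cell_indicator m j (xi i)) / real N - integral unit_cube (cell_indicator m j)"

lemma sum_lower_signed_cell_mass:
  assumes "m \<ge> 1" "\<forall>i<N. xi i \<in> unit_cube" "k \<in> grid m UNIV"
  shows "(\<Sum>j\<in>{j \<in> grid m UNIV. j \<le> k}. signed_cell_mass N xi m j) = local_discrepancy N xi (corner m k)"
  using sum_lower_count_cell_indicator[OF assms(1,2)] sum_lower_integral_cell_indicator[OF assms(1,3)]
  by (simp add: signed_cell_mass_def local_discrepancy_def sum_subtractf sum_divide_distrib[symmetric])

lemma sum_signed_cell_mass:
  assumes m: "m \<ge> 1" and "N \<ge> 1" and xi: "\<forall>i<N. xi i \<in> unit_cube"
  shows "(\<Sum>j\<in>grid m UNIV. signed_cell_mass N xi m j) = 0"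
proof -
  have "{j \<in> grid m UNIV. j \<le> (\<lambda>_. m - 1)} = grid m UNIV" "(\<lambda>_. m - 1) \<in> grid m UNIV"
    using lower_grid_top[of m UNIV] m by (simp_all add: grid_UNIV)
  then have "(\<Sum>j\<in>grid m UNIV. signed_cell_mass N xi m j) = local_discrepancy N xi One"
    using sum_lower_signed_cell_mass[OF m xi, of "\<lambda>_. m - 1"] corner_top[OF m] by metis
  also have "{i \<in> {..<N}. xi i \<in> unit_cube} = {..<N}" using xi by auto
  then have "local_discrepancy N xi One = 0"
    unfolding local_discrepancy_def unit_cube_def[symmetric] using assms(2)
    by (simp add: measure_unit_cube)
  finally show ?thesis .
qed

lemma sum_weighted_signed_cell_mass:
  fixes c :: "('n::finite \<Rightarrow> nat) \<Rightarrow> real"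
  assumes m: "m \<ge> 1" and xi: "\<forall>i<N. xi i \<in> unit_cube"
  shows "(\<Sum>j\<in>grid m UNIV. c j * signed_cell_mass N xi m j)
    = (1 / real N) * (\<Sum>i<N. c (cell m (xi i))) - integral unit_cube (\<lambda>x. c (cell m x))"
proof -
  have "(\<Sum>j\<in>grid m UNIV. c j * (\<Sum>i<N. cell_indicator m j (xi i)))
      = (\<Sum>i<N. \<Sum>j\<in>grid m UNIV. c j * cell_indicator m j (xi i))"
    unfolding sum_distrib_left by (rule sum.swap)
  also have "\<dots> = (\<Sum>i<N. c (cell m (xi i)))"
    using xi by (simp add: step_function_eq_sum_cell_indicator[OF m])
  finally show ?thesis
    unfolding integral_step_function[OF m] signed_cell_mass_def
    by (simp add: right_diff_distrib sum_subtractf sum_divide_distrib[symmetric])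
qed

section \<open>A Koksma--Hlawka inequality for the modulus of continuity\<close>

lemma abs_mean_diff_le:
  fixes a b :: "nat \<Rightarrow> real"
  assumes "\<And>i. i < N \<Longrightarrow> \<bar>a i - b i\<bar> \<le> \<omega>" "N \<ge> 1"
  shows "\<bar>(1 / real N) * (\<Sum>i<N. a i) - (1 / real N) * (\<Sum>i<N. b i)\<bar> \<le> \<omega>"
proof -
  have "\<bar>\<Sum>i<N. a i - b i\<bar> \<le> real N * \<omega>"
    using order_trans[OF sum_abs sum_mono[of "{..<N}", OF assms(1)]] by simp
  moreover have "(1 / real N) * (\<Sum>i<N. a i) - (1 / real N) * (\<Sum>i<N. b i) = (\<Sum>i<N. a i - b i) / real N"
    by (simp add: sum_subtractf diff_divide_distrib)
  ultimately show ?thesis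
    using assms(2) by (simp add: pos_divide_le_eq mult.commute)
qed

text \<open>Replace f by the step function taking the value f (corner m j) on cell j; this costs at
  most w(f, 1/m) on both the integral and the average, and the difference of the two averages of
  the step function is controlled by summation by parts on the grid.\<close>
lemma koksma_grid_bound:
  fixes N :: nat and xi :: "nat \<Rightarrow> real^'n" and f :: "real^'n \<Rightarrow> real"
  assumes m: "m \<ge> 1" and N: "N \<ge> 1" and xi: "\<forall>i<N. xi i \<in> unit_cube"
    and f: "continuous_on unit_cube f" and mesh: "1 / real m \<le> \<delta>"
  shows "\<bar>integral unit_cube f - (1 / real N) * (\<Sum>i<N. f (xi i))\<bar>
     \<le> (2 + 4 ^ CARD('n) * real m ^ CARD('n) * star_discrepancy N xi) * modulus f \<delta>"
proof -
  define D where "D = star_discrepancy N xi"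
  define \<omega> where "\<omega> = modulus f \<delta>"
  define h where "h j = f (corner m j)" for j
  define \<nu> where "\<nu> = signed_cell_mass N xi m"
  let ?g = "\<lambda>x. h (cell m x)"
  have "0 \<le> 1 / real m" by simp
  then have \<omega>: "0 \<le> \<omega>" unfolding \<omega>_def using mesh by (intro modulus_nonneg[OF f]) linarith
  have D: "0 \<le> D" using star_discrepancy_pos[OF N, of xi] by (simp add: D_def)
  have close: "\<bar>f x - ?g x\<bar> \<le> \<omega>" if x: "x \<in> unit_cube" for x
    unfolding \<omega>_def h_def
    by (rule abs_diff_le_modulus[OF f x corner_in_unit_cube[OF cell_in_grid[OF m x]]])
       (use linf_norm_diff_corner_cell[OF m x] mesh in linarith)
  have decomposition: "integral unit_cube f - (1 / real N) * (\<Sum>i<N. f (xi i))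
      = (integral unit_cube f - integral unit_cube ?g)
        - ((\<Sum>j\<in>grid m UNIV. h j * \<nu> j) - h (\<lambda>_. 0) * (\<Sum>j\<in>grid m UNIV. \<nu> j))
        + ((1 / real N) * (\<Sum>i<N. ?g (xi i)) - (1 / real N) * (\<Sum>i<N. f (xi i)))"
    using sum_weighted_signed_cell_mass[OF m xi, of h] sum_signed_cell_mass[OF m N xi]
    by (simp add: \<nu>_def)
  have integral_error: "\<bar>integral unit_cube f - integral unit_cube ?g\<bar> \<le> \<omega>"
  proof -
    have "?g integrable_on unit_cube" by (rule step_function_integrable[OF m])
    moreover have "f integrable_on unit_cube" using f by (simp add: unit_cube_def integrable_continuous)
    ultimately show ?thesis
      using has_integral_bound[OF \<omega> integrable_integral, of "\<lambda>x. f x - ?g x" 0 One] close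
      by (simp add: integral_diff integrable_diff measure_unit_cube[unfolded unit_cube_def] unit_cube_def)
  qed
  have weighted_sum: "\<bar>(\<Sum>j\<in>grid m UNIV. h j * \<nu> j) - h (\<lambda>_. 0) * (\<Sum>j\<in>grid m UNIV. \<nu> j)\<bar>
      \<le> 4 ^ CARD('n) * real m ^ CARD('n) * \<omega> * D"
  proof (rule grid_summation_by_parts_bound[OF finite \<omega> D])
    show "\<bar>\<Sum>j\<in>{j \<in> grid m UNIV. j \<le> k}. \<nu> j\<bar> \<le> D" if "k \<in> grid m UNIV" for k
      using sum_lower_signed_cell_mass[OF m xi that]
        abs_local_discrepancy_le_star_discrepancy[OF corner_in_unit_cube[OF that]]
      by (simp add: \<nu>_def D_def)
    show "\<bar>h (j(i := Suc (j i))) - h j\<bar> \<le> \<omega>"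
      if "j \<in> grid m UNIV" "j(i := Suc (j i)) \<in> grid m UNIV" for j i
      unfolding h_def \<omega>_def
      by (rule abs_diff_le_modulus[OF f corner_in_unit_cube corner_in_unit_cube])
         (use that linf_norm_corner_step[of m j i] mesh in auto)
  qed
  have mean_error: "\<bar>(1 / real N) * (\<Sum>i<N. ?g (xi i)) - (1 / real N) * (\<Sum>i<N. f (xi i))\<bar> \<le> \<omega>"
    by (rule abs_mean_diff_le[OF _ N]) (use close xi in \<open>auto simp: abs_minus_commute\<close>)
  have "\<bar>integral unit_cube f - (1 / real N) * (\<Sum>i<N. f (xi i))\<bar>
      \<le> \<omega> + 4 ^ CARD('n) * real m ^ CARD('n) * \<omega> * D + \<omega>"
    unfolding decomposition
    by (rule order_trans[OF abs_triangle_ineq add_mono[OF order_trans[OF abs_triangle_ineq4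
          add_mono[OF integral_error weighted_sum]] mean_error]])
  then show ?thesis by (simp add: D_def \<omega>_def algebra_simps)
qed

text \<open>Take the mesh 1/m with m = \<lceil>1/\<delta>\<rceil>, \<delta> = D^(1/d), so that m^d D \<le> 2^d.\<close>
lemma koksma_modulus_bound:
  fixes N :: nat and xi :: "nat \<Rightarrow> real^'n" and f :: "real^'n \<Rightarrow> real"
  assumes N: "N \<ge> 1" and xi: "\<forall>i<N. xi i \<in> unit_cube" and f: "continuous_on unit_cube f"
  shows "\<bar>integral unit_cube f - (1 / real N) * (\<Sum>i<N. f (xi i))\<bar>
     \<le> (2 + 8 ^ CARD('n)) * modulus f (star_discrepancy N xi powr (1 / real CARD('n)))"
proof -
  define d where "d = CARD('n)"
  define D where "D = star_discrepancy N xi"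
  define \<delta> where "\<delta> = D powr (1 / real d)"
  define m where "m = nat \<lceil>1 / \<delta>\<rceil>"
  have d: "d \<ge> 1" by (simp add: d_def Suc_le_eq)
  have D: "0 < D" "D \<le> 1"
    unfolding D_def by (simp_all add: star_discrepancy_pos[OF N] star_discrepancy_le_1)
  have \<delta>: "0 < \<delta>" "\<delta> \<le> 1" "\<delta> ^ d = D"
    using D d by (simp_all add: \<delta>_def powr_le1 powr_realpow[symmetric] powr_powr)
  have "1 \<le> 1 / \<delta>" using \<delta> by simp
  then have m: "m \<ge> 1" "1 / \<delta> \<le> real m" "real m \<le> 2 / \<delta>" unfolding m_def by linarith+
  have mesh: "1 / real m \<le> \<delta>" using m \<delta> by (simp add: field_simps)
  have "real m ^ d * D \<le> (2 / \<delta>) ^ d * D"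
    using m D by (intro mult_right_mono power_mono) auto
  also have "\<dots> = 2 ^ d" using \<delta> D by (simp add: power_divide)
  finally have "4 ^ d * real m ^ d * D \<le> 4 ^ d * 2 ^ d"
    by (simp add: mult.assoc)
  also have "\<dots> = 8 ^ d" by (simp add: power_mult_distrib[symmetric])
  finally have "2 + 4 ^ d * real m ^ d * D \<le> 2 + 8 ^ d" by simp
  moreover have "0 \<le> modulus f \<delta>" using modulus_nonneg[OF f] \<delta> by simp
  ultimately have "(2 + 4 ^ d * real m ^ d * D) * modulus f \<delta> \<le> (2 + 8 ^ d) * modulus f \<delta>"
    by (rule mult_right_mono)
  then show ?thesis
    using koksma_grid_bound[OF m(1) N xi f mesh] by (simp add: d_def D_def \<delta>_def)
qed

definition admissible_constant :: "'n::finite itself \<Rightarrow> real \<Rightarrow> bool" where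
  "admissible_constant _ C \<longleftrightarrow> (\<forall>N (xi :: nat \<Rightarrow> real^'n) f. N \<ge> 1 \<longrightarrow> (\<forall>i<N. xi i \<in> unit_cube) \<longrightarrow>
     continuous_on unit_cube f \<longrightarrow>
     \<bar>integral unit_cube f - (1 / real N) * (\<Sum>i<N. f (xi i))\<bar>
       \<le> C * modulus f (star_discrepancy N xi powr (1 / real CARD('n))))"

lemma Cd_eq_Inf_admissible: "Cd TYPE('n) = Inf {C. admissible_constant TYPE('n::finite) C}"
  unfolding Cd_def admissible_constant_def ..

lemma admissible_constant_exists: "admissible_constant TYPE('n::finite) (2 + 8 ^ CARD('n))"
  unfolding admissible_constant_def using koksma_modulus_bound by blast

text \<open>With N = 1 and f a coordinate function the left-hand side is positive for a suitable point.\<close>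
lemma admissible_constant_nonneg:
  assumes "admissible_constant TYPE('n::finite) C"
  shows "0 \<le> C"
proof (rule ccontr)
  assume "\<not> 0 \<le> C"
  fix a :: 'n
  define f :: "real^'n \<Rightarrow> real" where "f x = x $ a" for x
  have f: "continuous_on unit_cube f" unfolding f_def by (intro continuous_intros)
  have "\<bar>integral unit_cube f - f p\<bar> \<le> 0" if p: "p \<in> unit_cube" for p
  proof -
    let ?\<delta> = "star_discrepancy 1 (\<lambda>_. p) powr (1 / real CARD('n))"
    have "\<bar>integral unit_cube f - f p\<bar> \<le> C * modulus f ?\<delta>"
      using assms[unfolded admissible_constant_def, rule_format, of 1 "\<lambda>_. p" f] p f by simp
    also have "\<dots> \<le> 0"
      using \<open>\<not> 0 \<le> C\<close> modulus_nonneg[OF f, of ?\<delta>] by (simp add: mult_nonpos_nonneg)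
    finally show ?thesis .
  qed
  from this[OF zero_in_unit_cube] this[OF One_in_unit_cube] show False by (simp add: f_def)
qed

section \<open>The quantization error\<close>

definition linf_setdist :: "(real^'n) set \<Rightarrow> real^'n \<Rightarrow> real" where
  "linf_setdist G u = Inf ((\<lambda>a. linf_norm (u - a)) ` G)"

lemma e1_unif_eq_integral_linf_setdist: "e1_unif G = integral unit_cube (linf_setdist G)"
  unfolding e1_unif_def linf_setdist_def ..

lemma linf_setdist_le: "finite G \<Longrightarrow> a \<in> G \<Longrightarrow> linf_setdist G u \<le> linf_norm (u - a)"
  unfolding linf_setdist_def by (rule cInf_lower) auto

lemma linf_setdist_attained:
  assumes "finite G" "G \<noteq> {}"
  obtains a where "a \<in> G" "linf_setdist G u = linf_norm (u - a)"
proof -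
  have "linf_setdist G u \<in> (\<lambda>a. linf_norm (u - a)) ` G"
    using Min_in[of "(\<lambda>a. linf_norm (u - a)) ` G"] assms by (simp add: linf_setdist_def cInf_eq_Min)
  then show ?thesis using that by blast
qed

lemma linf_setdist_nonneg: "finite G \<Longrightarrow> G \<noteq> {} \<Longrightarrow> 0 \<le> linf_setdist G u"
  by (metis linf_setdist_attained linf_norm_nonneg)

lemma linf_setdist_self: "finite G \<Longrightarrow> a \<in> G \<Longrightarrow> linf_setdist G a = 0"
  using linf_setdist_le[of G a a] linf_setdist_nonneg[of G a] by fastforce

lemma abs_linf_setdist_diff_le:
  assumes "finite G" "G \<noteq> {}"
  shows "\<bar>linf_setdist G u - linf_setdist G v\<bar> \<le> linf_norm (u - v)"
proof -
  have "linf_setdist G x \<le> linf_setdist G y + linf_norm (x - y)" for x y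
  proof -
    obtain a where a: "a \<in> G" "linf_setdist G y = linf_norm (y - a)"
      using linf_setdist_attained[OF assms] .
    have "linf_setdist G x \<le> linf_norm (x - a)" by (rule linf_setdist_le[OF assms(1) a(1)])
    also have "\<dots> \<le> linf_norm (x - y) + linf_norm (y - a)" by (rule linf_norm_diff_triangle)
    finally show ?thesis using a(2) by linarith
  qed
  from this[of u v] this[of v u] show ?thesis using linf_norm_minus_commute[of u v] by linarith
qed

lemma continuous_on_linf_setdist:
  assumes "finite G" "G \<noteq> {}"
  shows "continuous_on S (linf_setdist G)"
proof (rule lipschitz_on_continuous_on)
  show "1-lipschitz_on S (linf_setdist G)"
    using abs_linf_setdist_diff_le[OF assms] linf_norm_le_norm
    by (intro lipschitz_onI) (auto simp: dist_real_def dist_norm intro: order_trans)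
qed

lemma e1_unif_le_admissible_constant:
  fixes xi :: "nat \<Rightarrow> real^'n"
  assumes N: "N \<ge> 1" and xi: "\<forall>i<N. xi i \<in> unit_cube" and C: "admissible_constant TYPE('n) C"
  shows "e1_unif (xi ` {..<N}) \<le> C * star_discrepancy N xi powr (1 / real CARD('n))"
proof -
  define G where "G = xi ` {..<N}"
  define \<delta> where "\<delta> = star_discrepancy N xi powr (1 / real CARD('n))"
  have G: "finite G" "G \<noteq> {}" using N by (auto simp: G_def lessThan_empty_iff)
  have "0 \<le> \<delta>" by (simp add: \<delta>_def)
  have "(\<Sum>i<N. linf_setdist G (xi i)) = 0"
    using linf_setdist_self[OF G(1)] by (simp add: G_def)
  moreover have "\<bar>integral unit_cube (linf_setdist G) - (1 / real N) * (\<Sum>i<N. linf_setdist G (xi i))\<bar>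
      \<le> C * modulus (linf_setdist G) \<delta>"
    using C[unfolded admissible_constant_def, rule_format, OF N xi[rule_format] continuous_on_linf_setdist[OF G]]
    unfolding \<delta>_def .
  ultimately have "e1_unif G \<le> C * modulus (linf_setdist G) \<delta>"
    by (simp add: e1_unif_eq_integral_linf_setdist)
  also have "\<dots> \<le> C * \<delta>"
    by (rule mult_left_mono[OF modulus_le_of_lipschitz[OF abs_linf_setdist_diff_le[OF G] \<open>0 \<le> \<delta>\<close>]
          admissible_constant_nonneg[OF C]])
  finally show ?thesis by (simp add: G_def \<delta>_def)
qed

lemma e1_unif_le_Cd:
  fixes xi :: "nat \<Rightarrow> real^'n"
  assumes "N \<ge> 1" "\<forall>i<N. xi i \<in> unit_cube"
  shows "e1_unif (xi ` {..<N}) \<le> Cd TYPE('n) * star_discrepancy N xi powr (1 / real CARD('n))"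
proof -
  define \<delta> where "\<delta> = star_discrepancy N xi powr (1 / real CARD('n))"
  have "0 < \<delta>" using star_discrepancy_pos[OF assms(1), of xi] by (simp add: \<delta>_def)
  have "e1_unif (xi ` {..<N}) / \<delta> \<le> Inf {C. admissible_constant TYPE('n) C}"
    using admissible_constant_exists e1_unif_le_admissible_constant[OF assms] \<open>0 < \<delta>\<close>
    by (intro cInf_greatest) (auto simp: \<delta>_def divide_le_eq)
  then show ?thesis using \<open>0 < \<delta>\<close> by (simp add: Cd_eq_Inf_admissible \<delta>_def divide_le_eq)
qed

lemma e1_unif_le_of_covering:
  fixes G :: "(real^'n) set"
  assumes "finite G" and cover: "\<And>u. u \<in> unit_cube \<Longrightarrow> \<exists>a\<in>G. linf_norm (u - a) \<le> r"
  shows "e1_unif G \<le> r"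
proof -
  have G: "G \<noteq> {}" using cover[OF zero_in_unit_cube] by blast
  have "integral unit_cube (linf_setdist G) \<le> integral unit_cube (\<lambda>_::real^'n. r)"
  proof (rule Henstock_Kurzweil_Integration.integral_le)
    show "linf_setdist G integrable_on unit_cube"
      unfolding unit_cube_def by (rule integrable_continuous[OF continuous_on_linf_setdist[OF assms(1) G]])
    show "(\<lambda>_. r) integrable_on unit_cube" unfolding unit_cube_def by (rule integrable_const)
    show "linf_setdist G u \<le> r" if "u \<in> unit_cube" for u
      using cover[OF that] linf_setdist_le[OF assms(1)] by (meson order_trans)
  qed
  then show ?thesis by (simp add: e1_unif_eq_integral_linf_setdist unit_cube_def content_cbox_cart)
qed

text \<open>If no point lay within D of s, the empirical distribution function would take the same
  value at s - D - \<eta> and at s + D + \<eta> for some \<eta> > 0, and (after clipping to [0, 1])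
  could not stay within D of the identity at both places.\<close>
lemma exists_point_within_cdf_deviation:
  fixes x :: "nat \<Rightarrow> real"
  assumes N: "N \<ge> 1" and x: "\<And>p. p < N \<Longrightarrow> 0 \<le> x p \<and> x p \<le> 1"
    and cdf: "\<And>t. 0 \<le> t \<Longrightarrow> t \<le> 1 \<Longrightarrow> \<bar>real (card {p\<in>{..<N}. x p \<le> t}) / real N - t\<bar> \<le> D"
    and s: "0 \<le> s" "s \<le> 1"
  shows "\<exists>p<N. \<bar>s - x p\<bar> \<le> D"
proof (rule ccontr)
  assume "\<not> ?thesis"
  then have far: "D < \<bar>s - x p\<bar>" if "p < N" for p using that by force
  define F where "F t = real (card {p\<in>{..<N}. x p \<le> t}) / real N" for t
  have cdf_F: "\<bar>F t - t\<bar> \<le> D" if "0 \<le> t" "t \<le> 1" for t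
    using cdf[OF that] by (simp add: F_def)
  have "0 \<le> D" using cdf_F[of 0] by simp
  define \<eta> where "\<eta> = Min ((\<lambda>p. \<bar>s - x p\<bar> - D) ` {..<N}) / 2"
  have "0 < \<eta>" using far N by (simp add: \<eta>_def Min_gr_iff lessThan_empty_iff)
  have gap: "D + \<eta> < \<bar>s - x p\<bar>" if "p < N" for p
  proof -
    have "Min ((\<lambda>p. \<bar>s - x p\<bar> - D) ` {..<N}) \<le> \<bar>s - x p\<bar> - D"
      using that by (intro Min_le) auto
    then show ?thesis using \<open>0 < \<eta>\<close> by (simp add: \<eta>_def)
  qed
  define a b where "a = s - D - \<eta>" and "b = s + D + \<eta>"
  have "x p \<le> a \<longleftrightarrow> x p \<le> b" if "p < N" for p
    using gap[OF that] \<open>0 \<le> D\<close> \<open>0 < \<eta>\<close> unfolding a_def b_def by (auto simp: abs_real_def split: if_splits)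
  then have same: "F a = F b" unfolding F_def by (metis (mono_tags, lifting) lessThan_iff)
  have F0: "F a = 0" if "a < 0"
  proof -
    have "{p\<in>{..<N}. x p \<le> a} = {}" using x that by (auto simp: not_le less_le_trans)
    then show ?thesis by (simp add: F_def)
  qed
  have F1: "F b = 1" if "1 < b"
  proof -
    have "{p\<in>{..<N}. x p \<le> b} = {..<N}" using x that by (auto intro: order_trans less_imp_le)
    then show ?thesis using N by (simp add: F_def)
  qed
  consider "a < 0" "1 < b" | "a < 0" "b \<le> 1" | "0 \<le> a" "1 < b" | "0 \<le> a" "b \<le> 1" by linarith
  then show False
  proof cases
    case 1
    then show ?thesis using F0 F1 same by simp
  next
    case 2
    then have "\<bar>F b - b\<bar> \<le> D" using s \<open>0 \<le> D\<close> \<open>0 < \<eta>\<close> by (intro cdf_F) (simp_all add: b_def)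
    then show ?thesis using F0[OF \<open>a < 0\<close>] same s \<open>0 < \<eta>\<close> unfolding b_def by linarith
  next
    case 3
    then have "\<bar>F a - a\<bar> \<le> D" using s \<open>0 \<le> D\<close> \<open>0 < \<eta>\<close> by (intro cdf_F) (simp_all add: a_def)
    then show ?thesis using F1[OF \<open>1 < b\<close>] same s \<open>0 < \<eta>\<close> unfolding a_def by linarith
  next
    case 4
    then have "\<bar>F a - a\<bar> \<le> D" "\<bar>F b - b\<bar> \<le> D" using \<open>0 \<le> D\<close> \<open>0 < \<eta>\<close>
      by (intro cdf_F; simp add: a_def b_def)+
    then show ?thesis using same \<open>0 < \<eta>\<close> unfolding a_def b_def by linarith
  qed
qed

lemma e1_unif_le_star_discrepancy_dim1:
  fixes xi :: "nat \<Rightarrow> real^'n"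
  assumes d: "CARD('n) = 1" and N: "N \<ge> 1" and xi: "\<forall>i<N. xi i \<in> unit_cube"
  shows "e1_unif (xi ` {..<N}) \<le> star_discrepancy N xi"
proof (rule e1_unif_le_of_covering)
  obtain a :: 'n where "UNIV = {a}" using d by (rule card_1_singletonE)
  then have all_iff: "(\<forall>i. P i) \<longleftrightarrow> P a" for P by auto
  have cdf: "\<bar>real (card {p\<in>{..<N}. xi p $ a \<le> t}) / real N - t\<bar> \<le> star_discrepancy N xi"
    if "0 \<le> t" "t \<le> 1" for t
  proof -
    define v :: "real^'n" where "v = t *\<^sub>R One"
    have v: "v \<in> unit_cube" using that by (simp add: mem_unit_cube v_def)
    have "{p\<in>{..<N}. xi p \<in> cbox 0 v} = {p\<in>{..<N}. xi p $ a \<le> t}"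
      using xi by (auto simp: v_def mem_unit_cube mem_box_cart all_iff)
    moreover have "measure lborel (cbox 0 v) = t"
      using measure_cbox_zero[OF v] by (simp add: v_def d)
    ultimately show ?thesis
      using abs_local_discrepancy_le_star_discrepancy[OF v, of N xi] by (simp add: local_discrepancy_def)
  qed
  fix u :: "real^'n" assume u: "u \<in> unit_cube"
  obtain p where p: "p < N" "\<bar>u $ a - xi p $ a\<bar> \<le> star_discrepancy N xi"
    using exists_point_within_cdf_deviation[OF N _ cdf, of "u $ a"] xi u
    by (auto simp: mem_unit_cube)
  then have "linf_norm (u - xi p) \<le> star_discrepancy N xi"
    unfolding linf_norm_le_iff all_iff by simp
  then show "\<exists>b\<in>xi ` {..<N}. linf_norm (u - b) \<le> star_discrepancy N xi" using p by blast
qed simp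

theorem corollary7p2:
  fixes N :: nat and xi :: "nat \<Rightarrow> real^'n"
  assumes "N \<ge> 1" and "\<forall>i<N. xi i \<in> unit_cube"
  shows "e1_unif (xi ` {..<N})
           \<le> Cd TYPE('n) * star_discrepancy N xi powr (1 / real CARD('n))
       \<and> (CARD('n) = 1 \<longrightarrow> e1_unif (xi ` {..<N}) \<le> star_discrepancy N xi)"
  using e1_unif_le_Cd[OF assms] e1_unif_le_star_discrepancy_dim1[OF _ assms] by simp

end
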